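(* Let $G$ be a finite group and $(\Gamma,\rho)$ a voltage graph. Then $(\Gamma,\rho)$ is structurally balanced if and only if $f(c)=\mathbf 1$ for every semi-cycle $c$ of $\Gamma$.
   Context: $\Gamma=(V,E)$ is a simple digraph, $e_{ij}$ the edge $v_i\to v_j$, $\rho:E\to G$, $\mathbf 1$ the identity of $G$. A semi-walk is $w=v_{i_1}a_1\dots a_{n-1}v_{i_n}$ with each $a_j\in\{e_{i_ji_{j+1}},e_{i_{j+1}i_j}\}$; closed if $v_{i_1}=v_{i_n}$; a semi-cycle is a closed semi-walk with no repeated vertices other than the starting vertex equal to the ending vertex (a single vertex is a trivial semi-cycle). Net voltage $f(w)=\bar\rho(a_1)\cdots\bar\rho(a_{n-1})$, $\bar\rho(a_j)=\rho(a_j)$ if $a_j=e_{i_ji_{j+1}}$ and $\rho(a_j)^{-1}$ otherwise; $f=\mathbf 1$ on a single vertex. $(\Gamma,\rho)$ is structurally balanced if $f(w)=\mathbf 1$ for every closed semi-walk $w$. *)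

theory Defs
  imports "HOL-Algebra.Group"
begin

definition simple_digraph :: "'v set \<Rightarrow> ('v \<times> 'v) set \<Rightarrow> bool" where
  "simple_digraph V E \<longleftrightarrow> finite V \<and> E \<subseteq> V \<times> V \<and> (\<forall>v. (v, v) \<notin> E)"

definition voltage_graph :: "('g, 'b) monoid_scheme \<Rightarrow> 'v set \<Rightarrow> ('v \<times> 'v) set
    \<Rightarrow> ('v \<times> 'v \<Rightarrow> 'g) \<Rightarrow> bool" where
  "voltage_graph G V E \<rho> \<longleftrightarrow> group G \<and> simple_digraph V E \<and> (\<forall>e\<in>E. \<rho> e \<in> carrier G)"

definition semi_walk :: "'v set \<Rightarrow> ('v \<times> 'v) set \<Rightarrow> 'v list \<Rightarrow> ('v \<times> 'v) list \<Rightarrow> bool" where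
  "semi_walk V E vs as \<longleftrightarrow> vs \<noteq> [] \<and> set vs \<subseteq> V \<and> length as = length vs - 1 \<and>
     (\<forall>j < length as. as ! j \<in> E \<and>
        (as ! j = (vs ! j, vs ! Suc j) \<or> as ! j = (vs ! Suc j, vs ! j)))"

definition closed_semi_walk :: "'v set \<Rightarrow> ('v \<times> 'v) set \<Rightarrow> 'v list \<Rightarrow> ('v \<times> 'v) list \<Rightarrow> bool" where
  "closed_semi_walk V E vs as \<longleftrightarrow> semi_walk V E vs as \<and> hd vs = last vs"

text \<open>Semi-cycle: closed semi-walk with no repeated vertices except first = last
  (the one-vertex walk is the trivial semi-cycle).\<close>
definition semi_cycle :: "'v set \<Rightarrow> ('v \<times> 'v) set \<Rightarrow> 'v list \<Rightarrow> ('v \<times> 'v) list \<Rightarrow> bool" where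
  "semi_cycle V E vs as \<longleftrightarrow> closed_semi_walk V E vs as \<and> distinct (tl vs)"

text \<open>Net voltage f(w) = rhobar(a_1) ... rhobar(a_{n-1}); rhobar(a) = rho(a) if a is traversed
  forward (a = (v_{i_j}, v_{i_{j+1}})) and rho(a)^{-1} otherwise; f = 1 on a single vertex.\<close>
fun net_voltage :: "('g, 'b) monoid_scheme \<Rightarrow> ('v \<times> 'v \<Rightarrow> 'g) \<Rightarrow> 'v list \<Rightarrow> ('v \<times> 'v) list \<Rightarrow> 'g" where
  "net_voltage G \<rho> (u # v # vs) (a # as) =
     (if a = (u, v) then \<rho> a else inv\<^bsub>G\<^esub> (\<rho> a)) \<otimes>\<^bsub>G\<^esub> net_voltage G \<rho> (v # vs) as"
| "net_voltage G \<rho> _ _ = \<one>\<^bsub>G\<^esub>"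

definition structurally_balanced :: "('g, 'b) monoid_scheme \<Rightarrow> 'v set \<Rightarrow> ('v \<times> 'v) set
    \<Rightarrow> ('v \<times> 'v \<Rightarrow> 'g) \<Rightarrow> bool" where
  "structurally_balanced G V E \<rho> \<longleftrightarrow>
     (\<forall>vs as. closed_semi_walk V E vs as \<longrightarrow> net_voltage G \<rho> vs as = \<one>\<^bsub>G\<^esub>)"

end

theory Submission
  imports Defs
begin

text \<open>A closed semi-walk that is not a semi-cycle revisits some vertex w, so it is a
  concatenation A, (loop from w to w), C. Both the loop and the walk A w C with the loop cut out are
  shorter closed semi-walks; if the loop has net voltage 1, cutting it out does not change the net
  voltage. Induction on the length therefore reduces structural balance to semi-cycles.\<close>

lemma semi_walk_Nil [simp]: "\<not> semi_walk V E [] as"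
  by (simp add: semi_walk_def)

lemma semi_walk_singleton [simp]: "semi_walk V E [v] as \<longleftrightarrow> v \<in> V \<and> as = []"
  by (auto simp: semi_walk_def)

lemma semi_walk_Cons_Cons [simp]:
  "semi_walk V E (u # v # vs) as \<longleftrightarrow>
     (\<exists>a as'. as = a # as' \<and> u \<in> V \<and> a \<in> E \<and> (a = (u, v) \<or> a = (v, u)) \<and>
        semi_walk V E (v # vs) as')"
  by (cases as) (auto simp: semi_walk_def All_less_Suc2)

lemma semi_walk_arcs: "semi_walk V E vs as \<Longrightarrow> set as \<subseteq> E"
  unfolding semi_walk_def by (metis in_set_conv_nth subsetI)

lemma semi_walk_append_iff:
  assumes "length as1 = length xs"
  shows "semi_walk V E (xs @ v # ys) (as1 @ as2) \<longleftrightarrow>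
           semi_walk V E (xs @ [v]) as1 \<and> semi_walk V E (v # ys) as2"
  using assms
proof (induction xs arbitrary: as1)
  case Nil
  then show ?case by (cases ys) auto
next
  case (Cons x xs)
  then obtain a as1' where "as1 = a # as1'" "length as1' = length xs"
    by (cases as1) auto
  with Cons.IH show ?case by (cases xs) auto
qed

lemma closed_semi_walk_not_distinct_decomp:
  assumes "closed_semi_walk V E vs as" and "\<not> distinct (tl vs)"
  obtains A w B C as1 as2 as3 where
    "vs = A @ w # B @ w # C" "A \<noteq> []" "as = as1 @ as2 @ as3"
    "length as1 = length A" "length as2 = Suc (length B)"
    "semi_walk V E (A @ [w]) as1" "semi_walk V E (w # B @ [w]) as2" "semi_walk V E (w # C) as3"
proof -
  from assms(1) have walk: "semi_walk V E vs as"
    by (simp add: closed_semi_walk_def)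
  obtain A' w B C where "tl vs = A' @ w # B @ w # C"
    using not_distinct_decomp[OF assms(2)] by fastforce
  then obtain x where "vs = (x # A') @ w # B @ w # C"
    using walk by (cases vs) auto
  define A where "A = x # A'"
  with \<open>vs = (x # A') @ w # B @ w # C\<close> have vs: "vs = A @ w # B @ w # C" "A \<noteq> []"
    by simp_all
  define as1 where "as1 = take (length A) as"
  define as2 where "as2 = take (Suc (length B)) (drop (length A) as)"
  define as3 where "as3 = drop (Suc (length B)) (drop (length A) as)"
  have "length as = length vs - 1"
    using walk by (simp add: semi_walk_def)
  then have las1: "length as1 = length A" and las2: "length as2 = length (w # B)"
    by (simp_all add: vs as1_def as2_def)
  have as: "as = as1 @ as2 @ as3"
    by (simp add: as1_def as2_def as3_def del: drop_drop)
  have "semi_walk V E (A @ [w]) as1" and rest: "semi_walk V E (w # B @ w # C) (as2 @ as3)"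
    using walk semi_walk_append_iff[OF las1, where v = w and ys = "B @ w # C"]
    by (simp_all add: vs as)
  moreover have "semi_walk V E (w # B @ [w]) as2" "semi_walk V E (w # C) as3"
    using rest semi_walk_append_iff[OF las2, where v = w and ys = C] by simp_all
  ultimately show thesis
    using that[OF vs as las1] las2 by simp
qed

context group
begin

lemma net_voltage_closed:
  "\<rho> ` set as \<subseteq> carrier G \<Longrightarrow> net_voltage G \<rho> vs as \<in> carrier G"
proof (induction as arbitrary: vs)
  case Nil
  then show ?case by (cases vs rule: remdups_adj.cases) simp_all
next
  case (Cons a as)
  then show ?case by (cases vs rule: remdups_adj.cases) auto
qed

lemma net_voltage_append:
  assumes "length as1 = length xs" and "\<rho> ` set (as1 @ as2) \<subseteq> carrier G"
  shows "net_voltage G \<rho> (xs @ v # ys) (as1 @ as2) =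
           net_voltage G \<rho> (xs @ [v]) as1 \<otimes> net_voltage G \<rho> (v # ys) as2"
  using assms
proof (induction xs arbitrary: as1)
  case Nil
  then show ?case using net_voltage_closed[of \<rho> as2] by simp
next
  case (Cons x xs)
  then obtain a as1' where a: "as1 = a # as1'" "length as1' = length xs"
    by (cases as1) auto
  with Cons.prems have closed: "\<rho> a \<in> carrier G" "\<rho> ` set (as1' @ as2) \<subseteq> carrier G"
    by auto
  then have "net_voltage G \<rho> vs' as1' \<in> carrier G" "net_voltage G \<rho> vs' as2 \<in> carrier G" for vs'
    by (auto intro: net_voltage_closed)
  with Cons.IH[OF a(2)] a closed show ?case by (cases xs) (auto simp: m_assoc)
qed

lemma net_voltage_remove_loop:
  assumes "length as1 = length A" and "length as2 = Suc (length B)"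
    and "\<rho> ` set (as1 @ as2 @ as3) \<subseteq> carrier G"
    and "net_voltage G \<rho> (w # B @ [w]) as2 = \<one>"
  shows "net_voltage G \<rho> (A @ w # B @ w # C) (as1 @ as2 @ as3) =
           net_voltage G \<rho> (A @ w # C) (as1 @ as3)"
proof -
  have loop_arcs: "\<rho> ` set (as2 @ as3) \<subseteq> carrier G"
    using assms(3) by auto
  then have "net_voltage G \<rho> (w # C) as3 \<in> carrier G"
    by (auto intro: net_voltage_closed)
  with assms(2,4) net_voltage_append[of as2 "w # B", OF _ loop_arcs]
  have "net_voltage G \<rho> (w # B @ w # C) (as2 @ as3) = net_voltage G \<rho> (w # C) as3"
    by simp
  moreover have "net_voltage G \<rho> (A @ w # B @ w # C) (as1 @ as2 @ as3) =
      net_voltage G \<rho> (A @ [w]) as1 \<otimes> net_voltage G \<rho> (w # B @ w # C) (as2 @ as3)"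
    using assms(1,3) net_voltage_append[of as1 A \<rho> "as2 @ as3" w "B @ w # C"] by simp
  moreover have "net_voltage G \<rho> (A @ w # C) (as1 @ as3) =
      net_voltage G \<rho> (A @ [w]) as1 \<otimes> net_voltage G \<rho> (w # C) as3"
    using assms(1,3) net_voltage_append[of as1 A \<rho> as3 w C] by auto
  ultimately show ?thesis by simp
qed

lemma net_voltage_closed_semi_walk_eq_one:
  assumes "\<rho> ` E \<subseteq> carrier G"
    and cycles: "\<And>vs as. semi_cycle V E vs as \<Longrightarrow> net_voltage G \<rho> vs as = \<one>"
  shows "closed_semi_walk V E vs as \<Longrightarrow> net_voltage G \<rho> vs as = \<one>"
proof (induction "length vs" arbitrary: vs as rule: less_induct)
  case less
  show ?case
  proof (cases "distinct (tl vs)")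
    case True
    with less.prems show ?thesis by (intro cycles) (simp add: semi_cycle_def)
  next
    case False
    with less.prems obtain A w B C as1 as2 as3 where
      vs: "vs = A @ w # B @ w # C" "A \<noteq> []" and as: "as = as1 @ as2 @ as3"
      and lens: "length as1 = length A" "length as2 = Suc (length B)"
      and walks: "semi_walk V E (A @ [w]) as1" "semi_walk V E (w # B @ [w]) as2"
        "semi_walk V E (w # C) as3"
      by (rule closed_semi_walk_not_distinct_decomp)
    have arcs: "\<rho> ` set (as1 @ as2 @ as3) \<subseteq> carrier G"
      using less.prems assms(1) semi_walk_arcs
      by (fastforce simp: closed_semi_walk_def as)
    have "net_voltage G \<rho> (w # B @ [w]) as2 = \<one>"
      using walks(2) vs by (intro less.hyps) (auto simp: closed_semi_walk_def)
    moreover have "net_voltage G \<rho> (A @ w # C) (as1 @ as3) = \<one>"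
    proof (rule less.hyps)
      show "closed_semi_walk V E (A @ w # C) (as1 @ as3)"
        using less.prems walks(1,3) semi_walk_append_iff[OF lens(1)] vs
        by (simp add: closed_semi_walk_def last_append)
    qed (simp add: vs)
    ultimately show ?thesis
      using net_voltage_remove_loop[OF lens arcs] by (simp add: vs as)
  qed
qed

end

theorem lemma2:
  fixes G :: "('g, 'b) monoid_scheme" and V :: "'v set" and E :: "('v \<times> 'v) set"
    and \<rho> :: "'v \<times> 'v \<Rightarrow> 'g"
  assumes "finite (carrier G)"
    and "voltage_graph G V E \<rho>"
  shows "structurally_balanced G V E \<rho> \<longleftrightarrow>
         (\<forall>vs as. semi_cycle V E vs as \<longrightarrow> net_voltage G \<rho> vs as = \<one>\<^bsub>G\<^esub>)"
proof
  assume "structurally_balanced G V E \<rho>"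
  then show "\<forall>vs as. semi_cycle V E vs as \<longrightarrow> net_voltage G \<rho> vs as = \<one>\<^bsub>G\<^esub>"
    by (auto simp: structurally_balanced_def semi_cycle_def)
next
  assume cycles: "\<forall>vs as. semi_cycle V E vs as \<longrightarrow> net_voltage G \<rho> vs as = \<one>\<^bsub>G\<^esub>"
  from assms(2) have "group G" "\<rho> ` E \<subseteq> carrier G"
    by (auto simp: voltage_graph_def)
  with cycles show "structurally_balanced G V E \<rho>"
    unfolding structurally_balanced_def
    by (auto intro: group.net_voltage_closed_semi_walk_eq_one)
qed

end
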